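(* Consider the following $m$-round game against an adversary. In each round $i$, the adversary chooses (possibly based on the first $i-1$ rounds) numbers $0\leq p_i\leq\frac12$, $\frac{p_i}{4}\leq q_i\leq 1-p_i$, and $\gamma_i\in[0,1]$; then a random variable $X_i\in\{0,1,2\}$ is sampled with $\Pr[X_i=1]=p_i$, $\Pr[X_i=2]=q_i$, $\Pr[X_i=0]=1-p_i-q_i$, and its outcome is given to the adversary. For $k\in\mathbb R$ and $i\in[m]$ let $Z_i^{(k)}$ be the indicator of the event $\sum_{j=1}^{i}\mathbb 1\{X_j=2\}\gamma_j\leq k$, and for $j\in[m]$ let $W_j^{(k)}=\sum_{i=j}^{m}\mathbb 1\{X_i=1\}\gamma_i Z_i^{(k)}$, and $W^{(k)}=W_1^{(k)}$. Then for every adversary strategy, every $k\geq0$, every $\lambda\in\mathbb R$ and every $j\in[m]$, $$\Pr[W_j^{(k)}>\lambda]\leq\exp\left(-\frac{\lambda}{5}+3(k+1)\right).$$ In particular $\Pr[W^{(k)}>\lambda]\leq\exp\left(-\frac{\lambda}{5}+3(k+1)\right)$. *)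

theory Defs
  imports Complex_Main
begin

text \<open>Outcomes X_i are encoded as naturals 0, 1, 2. A (deterministic, adaptive)
adversary strategy maps the history of previous outcomes (a list of length i-1)
to the triple (p_i, q_i, gamma_i). Rounds are indexed 0..m-1 here.\<close>

type_synonym strategy = "nat list \<Rightarrow> real \<times> real \<times> real"

definition outcomes :: "nat \<Rightarrow> nat list set" where
  "outcomes m = {xs. length xs = m \<and> set xs \<subseteq> {0,1,2}}"

definition valid_strategy :: "nat \<Rightarrow> strategy \<Rightarrow> bool" where
  "valid_strategy m S \<longleftrightarrow>
     (\<forall>h. length h < m \<and> set h \<subseteq> {0,1,2} \<longrightarrow>
        (case S h of (p, q, g) \<Rightarrow>
           0 \<le> p \<and> p \<le> 1/2 \<and> p/4 \<le> q \<and> q \<le> 1 - p \<and> 0 \<le> g \<and> g \<le> 1))"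

definition round_prob :: "real \<times> real \<times> real \<Rightarrow> nat \<Rightarrow> real" where
  "round_prob c x = (case c of (p, q, g) \<Rightarrow>
      if x = 1 then p else if x = 2 then q else 1 - p - q)"

definition seq_prob :: "strategy \<Rightarrow> nat list \<Rightarrow> real" where
  "seq_prob S xs = (\<Prod>i<length xs. round_prob (S (take i xs)) (xs ! i))"

definition gam :: "strategy \<Rightarrow> nat list \<Rightarrow> nat \<Rightarrow> real" where
  "gam S xs i = snd (snd (S (take i xs)))"

definition ind :: "bool \<Rightarrow> real" where
  "ind b = (if b then 1 else 0)"

definition Zk :: "strategy \<Rightarrow> real \<Rightarrow> nat list \<Rightarrow> nat \<Rightarrow> real" where
  "Zk S k xs i = ind ((\<Sum>j\<le>i. ind (xs ! j = 2) * gam S xs j) \<le> k)"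

definition Wk :: "strategy \<Rightarrow> real \<Rightarrow> nat list \<Rightarrow> nat \<Rightarrow> real" where
  "Wk S k xs j = (\<Sum>i\<in>{j..<length xs}. ind (xs ! i = 1) * gam S xs i * Zk S k xs i)"

end

theory Submission
  imports Defs "HOL-Analysis.Convex"
begin

(*
  Let B be the sum of gamma_i 1{X_i = 2} over the rounds i >= j at which the gamma-weighted
  number of earlier outcomes 2 is still at most k. The potential W/5 - 3 B has exponential
  moment at most 1: given the history, a round multiplies its exponential by at most
  (1 - p - q) + p e^(gamma/5) + q e^(-3 gamma) <= 1, by convexity of exp together with
  q >= p/4 and 4 (e^(1/5) - 1) <= 1 - e^(-3). Since gamma_i <= 1, B <= k + 1, so W > lambda
  forces the potential above lambda/5 - 3 (k + 1), and Markov's inequality concludes.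
*)

lemma exp_mult_le_chord:
  fixes g a :: real
  assumes "0 \<le> g" "g \<le> 1"
  shows "exp (g * a) \<le> 1 + g * (exp a - 1)"
proof -
  have "exp ((1 - g) *\<^sub>R 0 + g *\<^sub>R a) \<le> (1 - g) * exp 0 + g * exp a"
    using convex_onD[OF exp_convex, of g 0 a] assms by auto
  then show ?thesis by (simp add: algebra_simps)
qed

lemma exp_one_fifth_exp_minus_three: "4 * (exp (1/5) - 1) \<le> 1 - exp (-3::real)"
proof -
  have "exp (1/20::real) \<le> 1 + 1/20 + (1/20)^2" by (rule exp_bound) auto
  then have "exp (1/20::real) \<le> 1.0525" by (simp add: power2_eq_square)
  then have "exp (1/20::real) ^ 4 \<le> 1.0525 ^ 4" by (intro power_mono) auto
  moreover have "exp (1/5::real) = exp (1/20) ^ 4"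
    by (simp add: exp_of_nat_mult[symmetric])
  ultimately have fifth: "exp (1/5::real) \<le> 1.2277" by (simp add: eval_nat_numeral)
  have "1 + 3/2 + (3/2)^2/2 \<le> exp (3/2::real)" by (rule exp_lower_Taylor_quadratic) auto
  then have "(29/8) ^ 2 \<le> exp (3/2::real) ^ 2" by (intro power_mono) (auto simp: power2_eq_square)
  moreover have "exp (3::real) = exp (3/2) ^ 2"
    by (simp add: exp_of_nat_mult[symmetric])
  ultimately have "13.1 \<le> exp (3::real)" by (simp add: power2_eq_square)
  then have "exp (-3::real) \<le> 1 / 13.1" by (simp add: exp_minus field_simps)
  with fifth show ?thesis by simp
qed

lemma round_exp_moment_le_1:
  fixes p q g :: real
  assumes "0 \<le> p" "p/4 \<le> q" "0 \<le> g" "g \<le> 1"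
  shows "(1 - p - q) + p * exp (g/5) + q * exp (-3 * g) \<le> 1"
proof -
  have "exp (g/5) - 1 \<le> g * (exp (1/5) - 1)"
    using exp_mult_le_chord[OF assms(3,4), of "1/5"] by simp
  then have "p * (exp (g/5) - 1) \<le> p * (g * (exp (1/5) - 1))"
    using assms(1) by (rule mult_left_mono)
  moreover have "exp (-3 * g) - 1 \<le> g * (exp (-3) - 1)"
    using exp_mult_le_chord[OF assms(3,4), of "-3"] by (simp add: mult.commute)
  then have "q * (exp (-3 * g) - 1) \<le> q * (g * (exp (-3) - 1))"
    using assms(1,2) by (intro mult_left_mono) auto
  moreover have "g * (p * (exp (1/5) - 1) + q * (exp (-3) - 1)) \<le> 0"
  proof (rule mult_nonneg_nonpos)
    have "p * (exp (1/5) - 1) \<le> p * ((1 - exp (-3)) / 4)"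
      using exp_one_fifth_exp_minus_three assms(1) by (intro mult_left_mono) auto
    also have "\<dots> \<le> q * (1 - exp (-3))"
      using assms(2) by (simp add: mult_right_mono)
    finally show "p * (exp (1/5) - 1) + q * (exp (-3) - 1) \<le> 0" by (simp add: algebra_simps)
  qed fact
  ultimately show ?thesis by (simp add: algebra_simps)
qed

lemma outcomes_Suc_snoc:
  "outcomes (Suc n) = (\<lambda>(xs, x). xs @ [x]) ` (outcomes n \<times> {0,1,2})"
proof -
  have "xs \<in> (\<lambda>(xs, x). xs @ [x]) ` (outcomes n \<times> {0,1,2})" if "xs \<in> outcomes (Suc n)" for xs
    using that by (cases xs rule: rev_cases) (auto simp: outcomes_def image_iff)
  then show ?thesis by (auto simp: outcomes_def)
qed

lemma finite_outcomes: "finite (outcomes n)"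
  using finite_lists_length_eq[of "{0,1,2::nat}" n] by (simp add: outcomes_def conj_commute)

lemma sum_outcomes_Suc:
  "(\<Sum>xs\<in>outcomes (Suc n). F xs) = (\<Sum>xs\<in>outcomes n. \<Sum>x\<in>{0,1,2}. F (xs @ [x]))"
proof -
  have "inj_on (\<lambda>(xs, x). xs @ [x]) (outcomes n \<times> {0,1,2::nat})"
    by (auto simp: inj_on_def)
  then have "(\<Sum>xs\<in>outcomes (Suc n). F xs) = (\<Sum>(xs, x)\<in>outcomes n \<times> {0,1,2}. F (xs @ [x]))"
    unfolding outcomes_Suc_snoc by (subst sum.reindex) (auto simp: case_prod_beta)
  then show ?thesis by (simp only: sum.cartesian_product)
qed

lemma seq_prob_snoc:
  "seq_prob S (xs @ [x]) = seq_prob S xs * round_prob (S xs) x"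
proof -
  have prefix: "(\<Prod>i<length xs. round_prob (S (take i (xs @ [x]))) ((xs @ [x]) ! i)) = seq_prob S xs"
    unfolding seq_prob_def by (intro prod.cong) (auto simp: nth_append)
  show ?thesis
    unfolding seq_prob_def[of S "xs @ [x]"] length_append_singleton prod.lessThan_Suc prefix
    by simp
qed

lemma history_take:
  assumes "xs \<in> outcomes n" "i < n"
  shows "length (take i xs) < n" "set (take i xs) \<subseteq> {0,1,2}"
  using assms set_take_subset[of i xs] by (auto simp: outcomes_def)

lemma valid_strategyE:
  assumes "valid_strategy n S" "length h < n" "set h \<subseteq> {0,1,2}"
  obtains p q g where "S h = (p, q, g)" "0 \<le> p" "p \<le> 1/2" "p/4 \<le> q" "q \<le> 1 - p"
    "0 \<le> g" "g \<le> 1"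
  using assms unfolding valid_strategy_def by (cases "S h") auto

lemma seq_prob_nonneg:
  assumes "valid_strategy n S" "xs \<in> outcomes n"
  shows "0 \<le> seq_prob S xs"
  unfolding seq_prob_def
proof (rule prod_nonneg)
  fix i assume "i \<in> {..<length xs}"
  then have "i < n" using assms(2) by (simp add: outcomes_def)
  then obtain p q g where "S (take i xs) = (p, q, g)" "0 \<le> p" "p/4 \<le> q" "q \<le> 1 - p"
    using valid_strategyE[OF assms(1) history_take[OF assms(2)]] by metis
  then show "0 \<le> round_prob (S (take i xs)) (xs ! i)" by (auto simp: round_prob_def)
qed

lemma sum_take_snoc:
  "(\<Sum>i<Suc (length xs). f (take i (xs @ [x])) ((xs @ [x]) ! i))
     = (\<Sum>i<length xs. f (take i xs) (xs ! i)) + f xs x"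
proof -
  have "(\<Sum>i<length xs. f (take i (xs @ [x])) ((xs @ [x]) ! i)) = (\<Sum>i<length xs. f (take i xs) (xs ! i))"
    by (intro sum.cong) (auto simp: nth_append)
  then show ?thesis by simp
qed

lemma expectation_exp_sum_le_1:
  assumes "valid_strategy n S"
    and "\<And>h. length h < n \<Longrightarrow> set h \<subseteq> {0,1,2} \<Longrightarrow>
           (\<Sum>x\<in>{0,1,2}. round_prob (S h) x * exp (f h x)) \<le> 1"
  shows "(\<Sum>xs\<in>outcomes n. seq_prob S xs * exp (\<Sum>i<n. f (take i xs) (xs ! i))) \<le> 1"
  using assms
proof (induction n)
  case 0
  have "outcomes 0 = {[]}" by (auto simp: outcomes_def)
  then show ?case by (simp add: seq_prob_def)
next
  case (Suc n)
  define E where "E xs = seq_prob S xs * exp (\<Sum>i<n. f (take i xs) (xs ! i))" for xs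
  have valid: "valid_strategy n S"
    using Suc.prems(1) by (simp add: valid_strategy_def)
  have step: "seq_prob S (xs @ [x]) * exp (\<Sum>i<Suc n. f (take i (xs @ [x])) ((xs @ [x]) ! i))
      = E xs * (round_prob (S xs) x * exp (f xs x))" if "xs \<in> outcomes n" for xs x
    using that sum_take_snoc[of f xs x]
    by (simp add: outcomes_def E_def seq_prob_snoc exp_add)
  have "(\<Sum>xs\<in>outcomes (Suc n). seq_prob S xs * exp (\<Sum>i<Suc n. f (take i xs) (xs ! i)))
      = (\<Sum>xs\<in>outcomes n. E xs * (\<Sum>x\<in>{0,1,2}. round_prob (S xs) x * exp (f xs x)))"
    unfolding sum_outcomes_Suc sum_distrib_left by (intro sum.cong refl) (simp only: step)
  also have "\<dots> \<le> (\<Sum>xs\<in>outcomes n. E xs)"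
  proof (rule sum_mono)
    fix xs assume xs: "xs \<in> outcomes n"
    have "(\<Sum>x\<in>{0,1,2}. round_prob (S xs) x * exp (f xs x)) \<le> 1"
      using Suc.prems(2) xs by (auto simp: outcomes_def)
    moreover have "0 \<le> E xs" using seq_prob_nonneg[OF valid xs] by (simp add: E_def)
    ultimately show "E xs * (\<Sum>x\<in>{0,1,2}. round_prob (S xs) x * exp (f xs x)) \<le> E xs"
      by (rule mult_left_le)
  qed
  also have "\<dots> \<le> 1"
    unfolding E_def using Suc.IH valid Suc.prems(2) by simp
  finally show ?case .
qed

lemma sum_le_exp_moment:
  fixes p Y :: "'a \<Rightarrow> real"
  assumes "finite A" "\<And>x. x \<in> A \<Longrightarrow> 0 \<le> p x" "\<And>x. x \<in> A \<Longrightarrow> P x \<Longrightarrow> t \<le> Y x"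
  shows "(\<Sum>x\<in>{x \<in> A. P x}. p x) \<le> exp (- t) * (\<Sum>x\<in>A. p x * exp (Y x))"
proof -
  have "(\<Sum>x\<in>{x \<in> A. P x}. p x) \<le> (\<Sum>x\<in>{x \<in> A. P x}. p x * exp (Y x - t))"
  proof (rule sum_mono)
    fix x assume "x \<in> {x \<in> A. P x}"
    then have "1 \<le> exp (Y x - t)" "0 \<le> p x" using assms(2,3) by auto
    then show "p x \<le> p x * exp (Y x - t)" by (simp add: mult_le_cancel_left1)
  qed
  also have "\<dots> \<le> (\<Sum>x\<in>A. p x * exp (Y x - t))"
    using assms(1,2) by (intro sum_mono2) auto
  also have "\<dots> = exp (- t) * (\<Sum>x\<in>A. p x * exp (Y x))"
    by (simp add: sum_distrib_left exp_diff exp_minus field_simps)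
  finally show ?thesis .
qed

lemma sum_increments_below_threshold_le:
  fixes c :: "nat \<Rightarrow> real" and k :: real
  assumes "\<And>i. c i \<le> c (Suc i)" "\<And>i. c (Suc i) \<le> c i + 1" "0 \<le> c 0" "0 \<le> k"
  shows "(\<Sum>i<n. (c (Suc i) - c i) * ind (c i \<le> k)) \<le> k + 1"
proof -
  have "(\<Sum>i<n. (c (Suc i) - c i) * ind (c i \<le> k)) \<le> c n - c 0 \<and>
        (\<Sum>i<n. (c (Suc i) - c i) * ind (c i \<le> k)) \<le> k + 1"
  proof (induction n)
    case 0
    then show ?case using assms(4) by simp
  next
    case (Suc n)
    then show ?case
      using assms(1)[of n] assms(2)[of n] assms(3) by (auto simp: ind_def)
  qed
  then show ?thesis ..
qed

definition weighted_twos :: "strategy \<Rightarrow> nat list \<Rightarrow> real" where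
  "weighted_twos S h = (\<Sum>i<length h. ind (h ! i = 2) * snd (snd (S (take i h))))"

lemma weighted_twos_take:
  assumes "i \<le> length xs"
  shows "weighted_twos S (take i xs) = (\<Sum>l<i. ind (xs ! l = 2) * gam S xs l)"
  unfolding weighted_twos_def gam_def using assms by (intro sum.cong) (auto simp: min_def)

lemma Zk_eq_weighted_twos:
  assumes "i < length xs"
  shows "Zk S k xs i = ind (weighted_twos S (take (Suc i) xs) \<le> k)"
  unfolding Zk_def weighted_twos_take[OF Suc_leI[OF assms]] by (simp add: lessThan_Suc_atMost)

definition potential_increment :: "strategy \<Rightarrow> real \<Rightarrow> nat \<Rightarrow> nat list \<Rightarrow> nat \<Rightarrow> real" where
  "potential_increment S k j h x =
     (if j \<le> length h \<and> weighted_twos S h \<le> k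
      then snd (snd (S h)) * (ind (x = 1) / 5 - 3 * ind (x = 2)) else 0)"

lemma potential_increment_moment_le_1:
  assumes "valid_strategy n S" "length h < n" "set h \<subseteq> {0,1,2}"
  shows "(\<Sum>x\<in>{0,1,2}. round_prob (S h) x * exp (potential_increment S k j h x)) \<le> 1"
proof -
  obtain p q g where S: "S h = (p, q, g)" and v: "0 \<le> p" "p/4 \<le> q" "0 \<le> g" "g \<le> 1"
    using valid_strategyE[OF assms] by metis
  show ?thesis
  proof (cases "j \<le> length h \<and> weighted_twos S h \<le> k")
    case True
    then show ?thesis
      using round_exp_moment_le_1[OF v]
      by (simp add: potential_increment_def S round_prob_def ind_def mult.commute)
  next
    case False
    then have "potential_increment S k j h x = 0" for x
      unfolding potential_increment_def by (simp only: if_False)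
    then show ?thesis by (simp add: S round_prob_def)
  qed
qed

lemma Wk_le_potential:
  assumes "valid_strategy m S" "xs \<in> outcomes m" "0 \<le> k"
  shows "Wk S k xs j / 5 - 3 * (k + 1) \<le> (\<Sum>i<m. potential_increment S k j (take i xs) (xs ! i))"
proof -
  define c where "c i = weighted_twos S (take i xs)" for i
  define b where "b i = (c (Suc i) - c i) * ind (c i \<le> k)" for i
  have len: "length xs = m" using assms(2) by (simp add: outcomes_def)
  have gam: "0 \<le> gam S xs i \<and> gam S xs i \<le> 1" if "i < m" for i
    using valid_strategyE[OF assms(1) history_take[OF assms(2) that]]
    by (metis gam_def snd_conv)
  have c_step: "c (Suc i) = c i + ind (xs ! i = 2) * gam S xs i" if "i < m" for i
    using that len by (simp add: c_def weighted_twos_take)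
  have c_mono: "c i \<le> c (Suc i) \<and> c (Suc i) \<le> c i + 1" for i
  proof (cases "i < m")
    case True
    then show ?thesis using c_step gam by (simp add: ind_def)
  next
    case False
    then show ?thesis using len by (simp add: c_def)
  qed
  have increment: "potential_increment S k j (take i xs) (xs ! i)
      = (if j \<le> i then ind (xs ! i = 1) * gam S xs i * Zk S k xs i / 5 - 3 * b i else 0)"
    if "i < m" for i
    using that len c_step[OF that]
    by (auto simp: potential_increment_def Zk_eq_weighted_twos b_def c_def gam_def ind_def)
  have "(\<Sum>i<m. potential_increment S k j (take i xs) (xs ! i))
      = (\<Sum>i\<in>{j..<m}. ind (xs ! i = 1) * gam S xs i * Zk S k xs i / 5 - 3 * b i)"
  proof -
    have "{i \<in> {..<m}. j \<le> i} = {j..<m}" by auto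
    then show ?thesis by (simp add: increment sum.inter_filter[symmetric])
  qed
  also have "\<dots> = Wk S k xs j / 5 - 3 * (\<Sum>i\<in>{j..<m}. b i)"
    by (simp add: Wk_def len sum_subtractf sum_divide_distrib sum_distrib_left)
  finally have potential: "(\<Sum>i<m. potential_increment S k j (take i xs) (xs ! i))
      = Wk S k xs j / 5 - 3 * (\<Sum>i\<in>{j..<m}. b i)" .
  have "(\<Sum>i\<in>{j..<m}. b i) \<le> (\<Sum>i<m. b i)"
    using c_mono by (intro sum_mono2) (auto simp: b_def ind_def)
  also have "\<dots> \<le> k + 1"
    unfolding b_def using c_mono assms(3)
    by (intro sum_increments_below_threshold_le) (auto simp: c_def weighted_twos_def)
  finally show ?thesis using potential by simp
qed

theorem claimA1:
  fixes m :: nat and S :: strategy and k lam :: real and j :: nat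
  assumes "valid_strategy m S" and "0 \<le> k" and "j < m"
  shows "(\<Sum>xs\<in>{xs \<in> outcomes m. Wk S k xs j > lam}. seq_prob S xs)
           \<le> exp (- lam / 5 + 3 * (k + 1))"
proof -
  let ?Y = "\<lambda>xs. \<Sum>i<m. potential_increment S k j (take i xs) (xs ! i)"
  have "(\<Sum>xs\<in>{xs \<in> outcomes m. Wk S k xs j > lam}. seq_prob S xs)
      \<le> exp (- (lam / 5 - 3 * (k + 1))) * (\<Sum>xs\<in>outcomes m. seq_prob S xs * exp (?Y xs))"
  proof (rule sum_le_exp_moment)
    fix xs assume "xs \<in> outcomes m" "Wk S k xs j > lam"
    then show "lam / 5 - 3 * (k + 1) \<le> ?Y xs"
      using Wk_le_potential[OF assms(1) _ assms(2), of xs j] by linarith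
  qed (use finite_outcomes seq_prob_nonneg[OF assms(1)] in auto)
  also have "\<dots> \<le> exp (- (lam / 5 - 3 * (k + 1))) * 1"
    using expectation_exp_sum_le_1[OF assms(1) potential_increment_moment_le_1[OF assms(1)]]
    by (intro mult_left_mono) auto
  finally show ?thesis by simp
qed

end
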